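(* Let $\{e_j\}_{j\ge1}$ be an orthonormal sequence in a complex Hilbert space $X$ and let $\varphi(z)=\sum_{n=1}^\infty\langle z,e_n\rangle^n e_n$ for $z\in B_X$. Then: - $\varphi\in S(B_X)$; - $\varphi(rB_X)$ is relatively compact for every $0<r<1$; - the set $\{\varphi(z): z\in B_X,\ \|\varphi(z)\|<\tfrac12\}$ is not relatively compact, since the points $z_k=4^{-1/k}e_k$ satisfy $\|\varphi(z_k)\|<\frac12$ and $\|\varphi(z_k)-\varphi(z_{k+s})\|=\frac{\sqrt2}{4}$ for all $k\ge1$, $s\ge1$.
   Context: $B_X$ is the open unit ball of $X$, and $S(B_X)$ is the set of holomorphic self-maps of $B_X$. *)

theory Defs
  imports "HOL-Analysis.Analysis"
begin

class complex_hilbert = banach +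
  fixes scaleC :: "complex \<Rightarrow> 'a \<Rightarrow> 'a"
    and cinner :: "'a \<Rightarrow> 'a \<Rightarrow> complex"
  assumes scaleC_add_right: "scaleC a (x + y) = scaleC a x + scaleC a y"
    and scaleC_add_left: "scaleC (a + b) x = scaleC a x + scaleC b x"
    and scaleC_scaleC: "scaleC a (scaleC b x) = scaleC (a * b) x"
    and scaleC_one: "scaleC 1 x = x"
    and scaleR_scaleC: "scaleR r x = scaleC (complex_of_real r) x"
    and cinner_conj: "cinner x y = cnj (cinner y x)"
    and cinner_add_left: "cinner (x + y) z = cinner x z + cinner y z"
    and cinner_scaleC_left: "cinner (scaleC a x) y = a * cinner x y"
    and cinner_self_norm: "cinner x x = complex_of_real ((norm x)\<^sup>2)"

definition holo_on :: "('a::complex_hilbert \<Rightarrow> 'b::complex_hilbert) \<Rightarrow> 'a set \<Rightarrow> bool" where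
  "holo_on f S \<longleftrightarrow> (\<forall>z\<in>S. \<exists>L. (f has_derivative L) (at z) \<and>
      (\<forall>c x. L (scaleC c x) = scaleC c (L x)))"

definition self_maps :: "('a::complex_hilbert \<Rightarrow> 'a) set" where
  "self_maps = {f. holo_on f (ball 0 1) \<and> f ` ball 0 1 \<subseteq> ball 0 1}"

definition rel_compact :: "'a::metric_space set \<Rightarrow> bool" where
  "rel_compact A \<longleftrightarrow> compact (closure A)"

end

theory Submission
  imports Defs
begin

text \<open>
Since \<open>|\<langle>z, e\<^sub>n\<rangle>\<^sup>n| \<le> |\<langle>z, e\<^sub>n\<rangle>|\<close> on the closed unit ball, Bessel's inequality and the
Pythagorean theorem give \<open>\<parallel>\<phi>(z)\<parallel> \<le> \<parallel>z\<parallel>\<close>. The same domination by Fourier coefficients, now with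
weights \<open>(n + 1) \<rho>\<^sup>n \<rightarrow> 0\<close>, makes the termwise derivative series converge uniformly on \<open>\<rho> B\<^sub>X\<close>,
so \<open>\<phi>\<close> is holomorphic. On \<open>r B\<^sub>X\<close> the tail \<open>\<Sum>\<^sub>n\<^sub>\<ge>\<^sub>N\<close> of the series has norm at most \<open>r\<^sup>N\<close>
while the head ranges over a compact set, so \<open>\<phi>(r B\<^sub>X)\<close> is totally bounded. Finally
\<open>\<phi>(4\<^sup>-\<^sup>1\<^sup>/\<^sup>k e\<^sub>k) = e\<^sub>k / 4\<close>: these values are small and pairwise at distance \<open>\<surd>2 / 4\<close>, so no
subsequence of them converges.
\<close>

subsection \<open>Algebra of complex Hilbert spaces\<close>

lemma scaleC_zero_left [simp]: "scaleC 0 (x::'a::complex_hilbert) = 0"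
  using scaleC_add_left[of 0 0 x] by simp

lemma scaleC_of_real: "scaleC (complex_of_real r) x = scaleR r (x::'a::complex_hilbert)"
  by (simp add: scaleR_scaleC)

lemma cinner_zero_left [simp]: "cinner 0 (y::'a::complex_hilbert) = 0"
  using cinner_add_left[of 0 0 y] by simp

lemma cinner_zero_right [simp]: "cinner (y::'a::complex_hilbert) 0 = 0"
  using cinner_conj[of y 0] by simp

lemma cinner_add_right: "cinner x (y + z) = cinner x y + cinner x (z::'a::complex_hilbert)"
  using cinner_conj[of x "y+z"] cinner_add_left[of y z x] cinner_conj[of y x] cinner_conj[of z x]
  by simp

lemma cinner_scaleC_right: "cinner x (scaleC a y) = cnj a * cinner x (y::'a::complex_hilbert)"
  using cinner_conj[of x "scaleC a y"] cinner_scaleC_left[of a y x] cinner_conj[of y x]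
  by simp

lemma cinner_minus_left: "cinner (- x) y = - cinner x (y::'a::complex_hilbert)"
  using cinner_add_left[of x "-x" y] by (simp add: eq_neg_iff_add_eq_0 add.commute)

lemma cinner_minus_right: "cinner y (- x) = - cinner y (x::'a::complex_hilbert)"
  using cinner_add_right[of y x "-x"] by (simp add: eq_neg_iff_add_eq_0 add.commute)

lemma cinner_diff_left: "cinner (x - z) y = cinner x y - cinner z (y::'a::complex_hilbert)"
  using cinner_add_left[of x "-z" y] cinner_minus_left by simp

lemma cinner_diff_right: "cinner y (x - z) = cinner y x - cinner y (z::'a::complex_hilbert)"
  using cinner_add_right[of y x "-z"] cinner_minus_right by simp

lemma cinner_sum_left: "cinner (sum g F) y = (\<Sum>i\<in>F. cinner (g i) (y::'a::complex_hilbert))"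
  by (induction F rule: infinite_finite_induct) (auto simp: cinner_add_left)

lemma cinner_sum_right: "cinner y (sum g F) = (\<Sum>i\<in>F. cinner y (g i::'a::complex_hilbert))"
  by (induction F rule: infinite_finite_induct) (auto simp: cinner_add_right)

lemma norm_scaleC: "norm (scaleC a x) = cmod a * norm (x::'a::complex_hilbert)"
proof -
  have "complex_of_real ((norm (scaleC a x))\<^sup>2) = cinner (scaleC a x) (scaleC a x)"
    by (rule cinner_self_norm[symmetric])
  also have "\<dots> = a * cnj a * cinner x x"
    by (simp add: cinner_scaleC_left cinner_scaleC_right mult.assoc)
  also have "\<dots> = a * cnj a * complex_of_real ((norm x)\<^sup>2)"
    by (simp only: cinner_self_norm)
  also have "a * cnj a = complex_of_real ((cmod a)\<^sup>2)"
    by (simp only: complex_norm_square)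
  finally have "(norm (scaleC a x))\<^sup>2 = (cmod a * norm x)\<^sup>2"
    by (metis of_real_eq_iff of_real_mult power_mult_distrib)
  then show ?thesis
    by (simp add: power2_eq_iff_nonneg)
qed

lemma bounded_linear_scaleC_right: "bounded_linear (scaleC a :: 'a::complex_hilbert \<Rightarrow> 'a)"
proof (rule bounded_linear_intro[where K="cmod a"])
  fix r and x :: 'a
  show "scaleC a (scaleR r x) = scaleR r (scaleC a x)"
    by (simp add: scaleR_scaleC scaleC_scaleC mult.commute)
qed (auto simp: scaleC_add_right norm_scaleC mult.commute)

lemma bounded_linear_scaleC_left: "bounded_linear (\<lambda>a. scaleC a (x::'a::complex_hilbert))"
proof (rule bounded_linear_intro[where K="norm x"])
  fix r a
  show "scaleC (scaleR r a) x = scaleR r (scaleC a x)"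
    by (simp add: scaleR_conv_of_real scaleR_scaleC scaleC_scaleC)
qed (auto simp: scaleC_add_left norm_scaleC)

lemma cmod_cinner_unit_le:
  fixes x u :: "'a::complex_hilbert"
  assumes "norm u = 1" shows "cmod (cinner x u) \<le> norm x"
proof -
  define c where "c = cinner x u"
  have uu: "cinner u u = 1" using assms cinner_self_norm[of u] by simp
  have ux: "cinner u x = cnj c" using cinner_conj[of u x] c_def by simp
  have "complex_of_real ((norm (x - scaleC c u))\<^sup>2) = cinner (x - scaleC c u) (x - scaleC c u)"
    by (rule cinner_self_norm[symmetric])
  also have "\<dots> = cinner x x - cnj c * cinner x u - c * cinner u x + c * cnj c * cinner u u"
    by (simp add: cinner_diff_left cinner_diff_right cinner_scaleC_left cinner_scaleC_right algebra_simps)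
  also have "\<dots> = cinner x x - c * cnj c"
    by (simp add: uu ux c_def[symmetric] algebra_simps)
  also have "\<dots> = complex_of_real ((norm x)\<^sup>2 - (cmod c)\<^sup>2)"
    by (simp add: cinner_self_norm complex_norm_square[symmetric])
  finally have "(norm (x - scaleC c u))\<^sup>2 = (norm x)\<^sup>2 - (cmod c)\<^sup>2"
    using of_real_eq_iff by blast
  then have "(cmod c)\<^sup>2 \<le> (norm x)\<^sup>2" by (metis diff_ge_0_iff_ge zero_le_power2)
  then show ?thesis unfolding c_def by (simp add: power2_le_iff_abs_le)
qed

lemma cauchy_schwarz_cinner: "cmod (cinner x y) \<le> norm x * norm (y::'a::complex_hilbert)"
proof (cases "y = 0")
  case False
  define u where "u = scaleC (complex_of_real (1 / norm y)) y"
  have nu: "norm u = 1" using False by (simp add: u_def norm_scaleC norm_divide)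
  have "y = scaleC (complex_of_real (norm y)) u"
    using False by (simp add: u_def scaleC_scaleC scaleC_one flip: of_real_mult)
  then have "cinner x y = complex_of_real (norm y) * cinner x u"
    by (metis cinner_scaleC_right complex_cnj_complex_of_real)
  then have "cmod (cinner x y) = norm y * cmod (cinner x u)" by (simp add: norm_mult)
  also have "\<dots> \<le> norm y * norm x" using cmod_cinner_unit_le[OF nu, of x] by (simp add: mult_left_mono)
  finally show ?thesis by (simp add: mult.commute)
qed simp

lemma bounded_linear_cinner_left: "bounded_linear (\<lambda>x. cinner x (y::'a::complex_hilbert))"
proof (rule bounded_linear_intro[where K="norm y"])
  fix r and x :: 'a
  show "cinner (scaleR r x) y = scaleR r (cinner x y)"
    by (simp add: scaleR_scaleC cinner_scaleC_left scaleR_conv_of_real)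
qed (auto simp: cinner_add_left cauchy_schwarz_cinner)

subsection \<open>Orthonormal sequences\<close>

definition orthonormal_seq :: "(nat \<Rightarrow> 'a::complex_hilbert) \<Rightarrow> bool" where
  "orthonormal_seq f \<longleftrightarrow> (\<forall>j k. cinner (f j) (f k) = (if j = k then 1 else 0))"

lemma orthonormal_seq_shift: "orthonormal_seq f \<Longrightarrow> orthonormal_seq (\<lambda>i. f (i + N))"
  by (simp add: orthonormal_seq_def)

lemma norm_orthonormal_seq:
  assumes "orthonormal_seq f"
  shows "norm (f n) = 1"
proof -
  have "complex_of_real ((norm (f n))\<^sup>2) = 1"
    using assms cinner_self_norm[of "f n"] by (simp add: orthonormal_seq_def)
  then show ?thesis
    using norm_ge_zero[of "f n"] by (fastforce simp: power2_eq_1_iff simp del: of_real_power)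
qed

lemma cmod_cinner_orthonormal_seq_le: "orthonormal_seq f \<Longrightarrow> cmod (cinner x (f n)) \<le> norm x"
  by (rule cmod_cinner_unit_le[OF norm_orthonormal_seq])

lemma norm_diff_orthonormal_seq:
  assumes "orthonormal_seq f" "j \<noteq> k"
  shows "norm (f j - f k) = sqrt 2"
proof -
  have "complex_of_real ((norm (f j - f k))\<^sup>2) = cinner (f j - f k) (f j - f k)"
    by (rule cinner_self_norm[symmetric])
  also have "\<dots> = 2"
    using assms by (simp add: orthonormal_seq_def cinner_diff_left cinner_diff_right)
  finally have "(norm (f j - f k))\<^sup>2 = 2"
    by (metis of_real_eq_iff of_real_numeral)
  then show ?thesis
    by (metis norm_ge_zero real_sqrt_unique)
qed

lemma cinner_sum_orthonormal_seq:
  assumes "orthonormal_seq f" "finite F"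
  shows "cinner (\<Sum>n\<in>F. scaleC (a n) (f n)) (f m) = (if m \<in> F then a m else 0)"
proof -
  have "cinner (\<Sum>n\<in>F. scaleC (a n) (f n)) (f m) = (\<Sum>n\<in>F. a n * cinner (f n) (f m))"
    by (simp add: cinner_sum_left cinner_scaleC_left)
  also have "\<dots> = (\<Sum>n\<in>F. if n = m then a n else 0)"
    using assms(1) by (intro sum.cong) (auto simp: orthonormal_seq_def)
  finally show ?thesis
    using assms(2) by (simp add: sum.delta')
qed

lemma pythagoras_orthonormal_seq:
  assumes "orthonormal_seq f" "finite F"
  shows "(norm (\<Sum>n\<in>F. scaleC (a n) (f n)))\<^sup>2 = (\<Sum>n\<in>F. (cmod (a n))\<^sup>2)"
proof -
  define S where "S = (\<Sum>n\<in>F. scaleC (a n) (f n))"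
  have "complex_of_real ((norm S)\<^sup>2) = cinner S S"
    by (rule cinner_self_norm[symmetric])
  also have "\<dots> = (\<Sum>n\<in>F. a n * cinner (f n) S)"
    unfolding S_def by (simp add: cinner_sum_left cinner_scaleC_left)
  also have "\<dots> = (\<Sum>n\<in>F. a n * cnj (a n))"
  proof (rule sum.cong[OF refl])
    fix n
    assume "n \<in> F"
    then have "cinner S (f n) = a n"
      using cinner_sum_orthonormal_seq[OF assms, of a n] by (simp add: S_def)
    then show "a n * cinner (f n) S = a n * cnj (a n)"
      by (metis cinner_conj)
  qed
  also have "\<dots> = complex_of_real (\<Sum>n\<in>F. (cmod (a n))\<^sup>2)"
    by (simp only: of_real_sum complex_norm_square)
  finally show ?thesis
    unfolding S_def using of_real_eq_iff by blast
qed

lemma bessel_inequality_finite: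
  fixes x :: "'a::complex_hilbert"
  assumes "orthonormal_seq f" "finite F"
  shows "(\<Sum>n\<in>F. (cmod (cinner x (f n)))\<^sup>2) \<le> (norm x)\<^sup>2"
proof -
  define c where "c n = cinner x (f n)" for n
  define P where "P = (\<Sum>n\<in>F. scaleC (c n) (f n))"
  define s where "s = (\<Sum>n\<in>F. (cmod (c n))\<^sup>2)"
  have "(norm P)\<^sup>2 = s"
    unfolding P_def s_def by (rule pythagoras_orthonormal_seq[OF assms])
  then have PP: "cinner P P = complex_of_real s"
    by (metis cinner_self_norm)
  have "cinner x P = (\<Sum>n\<in>F. c n * cnj (c n))"
    by (simp add: P_def c_def cinner_sum_right cinner_scaleC_right mult.commute)
  also have "\<dots> = complex_of_real s"
    by (simp only: s_def of_real_sum complex_norm_square)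
  finally have xP: "cinner x P = complex_of_real s" .
  then have Px: "cinner P x = complex_of_real s"
    using cinner_conj[of P x] by simp
  have "complex_of_real ((norm (x - P))\<^sup>2) = cinner (x - P) (x - P)"
    by (rule cinner_self_norm[symmetric])
  also have "\<dots> = cinner x x - cinner x P - cinner P x + cinner P P"
    by (simp add: cinner_diff_left cinner_diff_right)
  also have "\<dots> = complex_of_real ((norm x)\<^sup>2 - s)"
    by (simp only: PP xP Px) (simp add: cinner_self_norm)
  finally have "s \<le> (norm x)\<^sup>2"
    by (metis diff_ge_0_iff_ge of_real_eq_iff zero_le_power2)
  then show ?thesis
    by (simp add: s_def c_def)
qed

lemma bessel_inequality:
  fixes x :: "'a::complex_hilbert"
  assumes "orthonormal_seq f"
  shows "summable (\<lambda>n. (cmod (cinner x (f n)))\<^sup>2)"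
    and "(\<Sum>n. (cmod (cinner x (f n)))\<^sup>2) \<le> (norm x)\<^sup>2"
proof -
  show s: "summable (\<lambda>n. (cmod (cinner x (f n)))\<^sup>2)"
    by (rule summableI_nonneg_bounded[where x="(norm x)\<^sup>2"])
      (auto intro: bessel_inequality_finite[OF assms])
  show "(\<Sum>n. (cmod (cinner x (f n)))\<^sup>2) \<le> (norm x)\<^sup>2"
    by (rule suminf_le_const[OF s]) (auto intro: bessel_inequality_finite[OF assms])
qed

lemma summable_orthonormal_series:
  fixes f :: "nat \<Rightarrow> 'a::complex_hilbert"
  assumes f: "orthonormal_seq f" and a: "summable (\<lambda>n. (cmod (a n))\<^sup>2)"
  shows "summable (\<lambda>n. scaleC (a n) (f n))"
  unfolding summable_Cauchy
proof (intro allI impI)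
  fix e :: real
  assume "e > 0"
  then have "e\<^sup>2 > 0"
    by simp
  with a obtain N where N: "\<And>m n. m \<ge> N \<Longrightarrow> norm (\<Sum>i\<in>{m..<n}. (cmod (a i))\<^sup>2) < e\<^sup>2"
    unfolding summable_Cauchy by blast
  show "\<exists>N. \<forall>m\<ge>N. \<forall>n. norm (\<Sum>i\<in>{m..<n}. scaleC (a i) (f i)) < e"
  proof (intro exI allI impI)
    fix m n
    assume "m \<ge> N"
    have "(norm (\<Sum>i\<in>{m..<n}. scaleC (a i) (f i)))\<^sup>2 = (\<Sum>i\<in>{m..<n}. (cmod (a i))\<^sup>2)"
      by (simp add: pythagoras_orthonormal_seq[OF f])
    also have "\<dots> < e\<^sup>2"
      using N[OF \<open>m \<ge> N\<close>, of n] by (simp add: sum_nonneg)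
    finally show "norm (\<Sum>i\<in>{m..<n}. scaleC (a i) (f i)) < e"
      using \<open>e > 0\<close> by (simp add: power_less_imp_less_base)
  qed
qed

lemma norm_suminf_orthonormal_series:
  fixes f :: "nat \<Rightarrow> 'a::complex_hilbert"
  assumes f: "orthonormal_seq f" and a: "summable (\<lambda>n. (cmod (a n))\<^sup>2)"
  shows "(norm (\<Sum>n. scaleC (a n) (f n)))\<^sup>2 = (\<Sum>n. (cmod (a n))\<^sup>2)"
proof (rule LIMSEQ_unique)
  have "(\<lambda>N. (norm (\<Sum>n<N. scaleC (a n) (f n)))\<^sup>2) \<longlonglongrightarrow> (norm (\<Sum>n. scaleC (a n) (f n)))\<^sup>2"
    by (intro tendsto_intros summable_LIMSEQ summable_orthonormal_series[OF f a])
  then show "(\<lambda>N. \<Sum>n<N. (cmod (a n))\<^sup>2) \<longlonglongrightarrow> (norm (\<Sum>n. scaleC (a n) (f n)))\<^sup>2"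
    by (simp add: pythagoras_orthonormal_seq[OF f])
  show "(\<lambda>N. \<Sum>n<N. (cmod (a n))\<^sup>2) \<longlonglongrightarrow> (\<Sum>n. (cmod (a n))\<^sup>2)"
    by (rule summable_LIMSEQ[OF a])
qed

lemma orthonormal_series_dominated:
  fixes f :: "nat \<Rightarrow> 'a::complex_hilbert"
  assumes f: "orthonormal_seq f" and "0 \<le> C"
    and a: "\<And>n. cmod (a n) \<le> C * cmod (cinner x (f n))"
  shows "summable (\<lambda>n. scaleC (a n) (f n))"
    and "norm (\<Sum>n. scaleC (a n) (f n)) \<le> C * norm x"
proof -
  have le: "(cmod (a n))\<^sup>2 \<le> C\<^sup>2 * (cmod (cinner x (f n)))\<^sup>2" for n
    using a[of n] by (metis norm_ge_zero power_mono power_mult_distrib)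
  have bs: "summable (\<lambda>n. C\<^sup>2 * (cmod (cinner x (f n)))\<^sup>2)"
    by (intro summable_mult bessel_inequality(1)[OF f])
  have sa: "summable (\<lambda>n. (cmod (a n))\<^sup>2)"
    by (rule summable_comparison_test'[OF bs, where N=0])
      (use le in \<open>simp only: real_norm_def abs_power2\<close>)
  then show "summable (\<lambda>n. scaleC (a n) (f n))"
    by (rule summable_orthonormal_series[OF f])
  have "(norm (\<Sum>n. scaleC (a n) (f n)))\<^sup>2 = (\<Sum>n. (cmod (a n))\<^sup>2)"
    by (rule norm_suminf_orthonormal_series[OF f sa])
  also have "\<dots> \<le> (\<Sum>n. C\<^sup>2 * (cmod (cinner x (f n)))\<^sup>2)"
    by (rule suminf_le[OF le sa bs])
  also have "\<dots> = C\<^sup>2 * (\<Sum>n. (cmod (cinner x (f n)))\<^sup>2)"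
    by (rule suminf_mult[OF bessel_inequality(1)[OF f]])
  also have "\<dots> \<le> C\<^sup>2 * (norm x)\<^sup>2"
    by (intro mult_left_mono bessel_inequality(2)[OF f]) simp
  finally have "(norm (\<Sum>n. scaleC (a n) (f n)))\<^sup>2 \<le> (C * norm x)\<^sup>2"
    by (simp only: power_mult_distrib)
  then show "norm (\<Sum>n. scaleC (a n) (f n)) \<le> C * norm x"
    by (rule power2_le_imp_le) (simp add: \<open>0 \<le> C\<close>)
qed

lemma compact_closure_if_approximable:
  fixes A :: "'a::complete_space set"
  assumes approx: "\<And>\<epsilon>. \<epsilon> > 0 \<Longrightarrow> \<exists>K. compact K \<and> (\<forall>y\<in>A. \<exists>x\<in>K. dist x y \<le> \<epsilon>)"
  shows "compact (closure A)"
  unfolding compact_eq_totally_bounded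
proof (intro conjI allI impI)
  show "complete (closure A)"
    by (simp add: complete_eq_closed)
  fix \<epsilon> :: real
  assume "\<epsilon> > 0"
  then obtain K where K: "compact K" "\<forall>y\<in>A. \<exists>x\<in>K. dist x y \<le> \<epsilon> / 3"
    using approx[of "\<epsilon> / 3"] by auto
  obtain k where k: "finite k" "K \<subseteq> (\<Union>w\<in>k. ball w (\<epsilon> / 3))"
    using K(1) \<open>\<epsilon> > 0\<close> unfolding compact_eq_totally_bounded by (meson divide_pos_pos zero_less_numeral)
  have "A \<subseteq> (\<Union>w\<in>k. cball w (2 * \<epsilon> / 3))"
  proof
    fix y
    assume "y \<in> A"
    then obtain x where x: "x \<in> K" "dist x y \<le> \<epsilon> / 3"
      using K(2) by blast
    then obtain w where w: "w \<in> k" "dist w x < \<epsilon> / 3"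
      using k(2) by auto
    have "dist w y \<le> 2 * \<epsilon> / 3"
      using dist_triangle[of w y x] x(2) w(2) by linarith
    then show "y \<in> (\<Union>w\<in>k. cball w (2 * \<epsilon> / 3))"
      using w(1) by auto
  qed
  then have "closure A \<subseteq> (\<Union>w\<in>k. cball w (2 * \<epsilon> / 3))"
    using k(1) by (intro closure_minimal) auto
  also have "\<dots> \<subseteq> (\<Union>w\<in>k. ball w \<epsilon>)"
    using \<open>\<epsilon> > 0\<close> by auto
  finally show "\<exists>k. finite k \<and> closure A \<subseteq> (\<Union>w\<in>k. ball w \<epsilon>)"
    using k(1) by blast
qed

lemma not_compact_closure_if_separated:
  fixes y :: "nat \<Rightarrow> 'a::metric_space"
  assumes "range y \<subseteq> A" "\<epsilon> > 0" "\<And>m n. m \<noteq> n \<Longrightarrow> \<epsilon> \<le> dist (y m) (y n)"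
  shows "\<not> compact (closure A)"
proof
  assume "compact (closure A)"
  moreover have "\<forall>n. y n \<in> closure A"
    using assms(1) closure_subset by blast
  ultimately obtain l r where r: "strict_mono r" "(y \<circ> r) \<longlonglongrightarrow> l"
    using compact_imp_seq_compact unfolding seq_compact_def by meson
  then obtain M where M: "\<forall>m\<ge>M. \<forall>n\<ge>M. dist ((y \<circ> r) m) ((y \<circ> r) n) < \<epsilon>"
    using LIMSEQ_imp_Cauchy metric_CauchyD assms(2) by blast
  have "r M \<noteq> r (Suc M)"
    using strict_monoD[OF r(1), of M "Suc M"] by simp
  then show False
    using M assms(3) by (metis comp_apply le_Suc_eq linorder_not_le order_refl)
qed

lemma bounded_combinations_in_compact:
  fixes f :: "nat \<Rightarrow> 'a::complex_hilbert"
  shows "\<exists>K. compact K \<and> (\<forall>a. (\<forall>n. cmod (a n) \<le> 1) \<longrightarrow> (\<Sum>n<N. scaleC (a n) (f n)) \<in> K)"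
proof (induction N)
  case 0
  show ?case
    by (intro exI[of _ "{0}"]) auto
next
  case (Suc N)
  then obtain K where K: "compact K"
    "\<And>a. \<forall>n. cmod (a n) \<le> 1 \<Longrightarrow> (\<Sum>n<N. scaleC (a n) (f n)) \<in> K"
    by blast
  define K' where "K' = (\<lambda>p. fst p + scaleC (snd p) (f N)) ` (K \<times> cball 0 1)"
  have "continuous_on (K \<times> cball 0 1) (\<lambda>p. fst p + scaleC (snd p) (f N))"
    by (intro continuous_intros bounded_linear.continuous_on[OF bounded_linear_scaleC_left])
  then have "compact K'"
    unfolding K'_def by (intro compact_continuous_image compact_Times K(1) compact_cball)
  moreover have "(\<Sum>n<Suc N. scaleC (a n) (f n)) \<in> K'" if "\<forall>n. cmod (a n) \<le> 1" for a
  proof -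
    have "((\<Sum>n<N. scaleC (a n) (f n)), a N) \<in> K \<times> cball 0 1"
      using K(2)[OF that] that by auto
    then show ?thesis
      unfolding K'_def by (force simp: image_iff)
  qed
  ultimately show ?case
    by blast
qed

subsection \<open>The diagonal power map\<close>

text \<open>Indexed from \<open>0\<close>: the map of the theorem is \<open>diagonal_power_map (\<lambda>n. e (n + 1))\<close>.\<close>

definition diagonal_power_map :: "(nat \<Rightarrow> 'a::complex_hilbert) \<Rightarrow> 'a \<Rightarrow> 'a" where
  "diagonal_power_map f z = (\<Sum>n. scaleC (cinner z (f n) ^ (n+1)) (f n))"

lemma norm_power_Suc_add_le:
  fixes c :: "'a::real_normed_div_algebra"
  assumes "norm c \<le> r" "r \<le> 1"
  shows "norm (c ^ (i + N + 1)) \<le> r ^ N * norm c"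
proof -
  have "norm (c ^ (i + N + 1)) = norm c ^ N * (norm c ^ i * norm c)"
    by (simp only: norm_power) (simp add: power_add mult_ac)
  also have "\<dots> \<le> r ^ N * (1 * norm c)"
    using assms order_trans[OF norm_ge_zero assms(1)]
    by (intro mult_mono power_mono mult_right_mono power_le_one) auto
  finally show ?thesis
    by simp
qed

lemma diagonal_power_map_tail:
  fixes f :: "nat \<Rightarrow> 'a::complex_hilbert"
  assumes f: "orthonormal_seq f" and "norm z \<le> r" "r \<le> 1"
  shows "summable (\<lambda>i. scaleC (cinner z (f (i+N)) ^ (i+N+1)) (f (i+N)))"
    and "norm (\<Sum>i. scaleC (cinner z (f (i+N)) ^ (i+N+1)) (f (i+N))) \<le> r ^ N * norm z"
proof -
  have le: "cmod (cinner z (f (i+N)) ^ (i+N+1)) \<le> r ^ N * cmod (cinner z (f (i+N)))" for i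
    using cmod_cinner_orthonormal_seq_le[OF f] assms(2,3)
    by (intro norm_power_Suc_add_le) (auto intro: order_trans)
  have "0 \<le> r ^ N"
    using assms(2) by (meson norm_ge_zero order_trans zero_le_power)
  note dominated = orthonormal_series_dominated[OF orthonormal_seq_shift[OF f] this le]
  show "summable (\<lambda>i. scaleC (cinner z (f (i+N)) ^ (i+N+1)) (f (i+N)))"
    by (rule dominated(1))
  show "norm (\<Sum>i. scaleC (cinner z (f (i+N)) ^ (i+N+1)) (f (i+N))) \<le> r ^ N * norm z"
    by (rule dominated(2))
qed

lemma norm_diagonal_power_map_le:
  fixes f :: "nat \<Rightarrow> 'a::complex_hilbert"
  assumes "orthonormal_seq f" "norm z \<le> 1"
  shows "norm (diagonal_power_map f z) \<le> norm z"
  using diagonal_power_map_tail(2)[OF assms order_refl, of 0] by (simp add: diagonal_power_map_def)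

lemma compact_closure_diagonal_power_map_ball:
  fixes f :: "nat \<Rightarrow> 'a::complex_hilbert"
  assumes f: "orthonormal_seq f" and r: "0 \<le> r" "r < 1"
  shows "compact (closure (diagonal_power_map f ` ball 0 r))"
proof (rule compact_closure_if_approximable)
  fix \<epsilon> :: real
  assume "\<epsilon> > 0"
  have "(\<lambda>N. r ^ N) \<longlonglongrightarrow> 0"
    using r by (intro LIMSEQ_power_zero) simp
  then have "eventually (\<lambda>N. r ^ N < \<epsilon>) sequentially"
    using \<open>\<epsilon> > 0\<close> by (rule order_tendstoD)
  then obtain N where N: "r ^ N < \<epsilon>"
    by (auto simp: eventually_sequentially)
  obtain K where K: "compact K"
    "\<And>a. \<forall>n. cmod (a n) \<le> 1 \<Longrightarrow> (\<Sum>n<N. scaleC (a n) (f n)) \<in> K"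
    using bounded_combinations_in_compact[where N=N and f=f] by blast
  have "\<exists>x\<in>K. dist x y \<le> \<epsilon>" if "y \<in> diagonal_power_map f ` ball 0 r" for y
  proof -
    obtain z where z: "norm z < r" "y = diagonal_power_map f z"
      using \<open>y \<in> _\<close> by auto
    define a where "a n = cinner z (f n) ^ (n+1)" for n
    have "cmod (a n) \<le> 1" for n
      using cmod_cinner_orthonormal_seq_le[OF f, of z n] z r
      unfolding a_def norm_power by (intro power_le_one) auto
    then have head: "(\<Sum>n<N. scaleC (a n) (f n)) \<in> K"
      using K(2) by blast
    have "y = (\<Sum>i. scaleC (a (i+N)) (f (i+N))) + (\<Sum>n<N. scaleC (a n) (f n))"
      using suminf_split_initial_segment[OF diagonal_power_map_tail(1)[OF f _ order_refl, of z 0]] z r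
      by (simp add: diagonal_power_map_def a_def)
    moreover have "norm (\<Sum>i. scaleC (a (i+N)) (f (i+N))) \<le> r ^ N * norm z"
      using diagonal_power_map_tail(2)[OF f _ _, of z r N] z r by (simp add: a_def)
    moreover have "r ^ N * norm z \<le> \<epsilon>"
      using N z r mult_left_le[of "norm z" "r ^ N"] by simp
    ultimately show ?thesis
      using head by (intro bexI[of _ "\<Sum>n<N. scaleC (a n) (f n)"]) (simp_all add: dist_norm)
  qed
  then show "\<exists>K. compact K \<and> (\<forall>y\<in>diagonal_power_map f ` ball 0 r. \<exists>x\<in>K. dist x y \<le> \<epsilon>)"
    using K(1) by blast
qed

lemma diagonal_power_map_scaleC_basis:
  fixes f :: "nat \<Rightarrow> 'a::complex_hilbert"
  assumes "orthonormal_seq f"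
  shows "diagonal_power_map f (scaleC c (f k)) = scaleC (c ^ (k+1)) (f k)"
proof -
  have "cinner (scaleC c (f k)) (f n) = (if n = k then c else 0)" for n
    using assms by (simp add: orthonormal_seq_def cinner_scaleC_left)
  then have "(\<lambda>n. scaleC (cinner (scaleC c (f k)) (f n) ^ (n+1)) (f n))
      = (\<lambda>n. if n = k then scaleC (c ^ (k+1)) (f k) else 0)"
    by auto
  then show ?thesis
    unfolding diagonal_power_map_def by (simp add: sums_unique[OF sums_single, symmetric])
qed

lemma diagonal_power_map_root_scaleC_basis:
  fixes f :: "nat \<Rightarrow> 'a::complex_hilbert"
  assumes "orthonormal_seq f" "a > 0"
  shows "diagonal_power_map f (scaleC (complex_of_real (a powr (-1 / real (k+1)))) (f k))
           = scaleR (1 / a) (f k)"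
proof -
  have "(a powr (-1 / real (k+1))) ^ (k+1) = a powr (real (k+1) * (-1 / real (k+1)))"
    by (rule powr_power) (use assms(2) in simp)
  also have "real (k+1) * (-1 / real (k+1)) = -1"
    by simp
  finally have root: "(a powr (-1 / real (k+1))) ^ (k+1) = 1 / a"
    using assms(2) by (simp add: powr_minus divide_inverse)
  show ?thesis
    unfolding diagonal_power_map_scaleC_basis[OF assms(1)] of_real_power[symmetric] root
    by (rule scaleC_of_real)
qed

subsection \<open>Holomorphy of the diagonal power map\<close>

definition diagonal_power_deriv :: "(nat \<Rightarrow> 'a::complex_hilbert) \<Rightarrow> 'a \<Rightarrow> 'a \<Rightarrow> 'a" where
  "diagonal_power_deriv f z h =
     (\<Sum>n. scaleC (of_nat (n+1) * cinner z (f n) ^ n * cinner h (f n)) (f n))"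

lemma has_derivative_cinner_power_scaleC:
  fixes u v :: "'a::complex_hilbert"
  shows "((\<lambda>x. scaleC (cinner x u ^ (n+1)) v) has_derivative
          (\<lambda>h. scaleC (of_nat (n+1) * cinner x u ^ n * cinner h u) v)) (at x within S)"
proof -
  have "((\<lambda>x. cinner x u) has_derivative (\<lambda>h. cinner h u)) (at x within S)"
    by (rule bounded_linear.has_derivative[OF bounded_linear_cinner_left has_derivative_ident])
  from has_derivative_power[OF this, of "n+1"]
  have "((\<lambda>x. cinner x u ^ (n+1)) has_derivative
      (\<lambda>h. of_nat (n+1) * cinner h u * cinner x u ^ n)) (at x within S)"
    by (simp add: mult_ac)
  from bounded_linear.has_derivative[OF bounded_linear_scaleC_left this]
  show ?thesis
    by (simp add: mult_ac)
qed

lemma cmod_deriv_coeff_le: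
  assumes "cmod c \<le> \<rho>"
  shows "cmod (of_nat (n+1) * c ^ n * d) \<le> real (n+1) * \<rho> ^ n * cmod d"
proof -
  have "cmod (of_nat (n+1) * c ^ n * d) = real (n+1) * cmod c ^ n * cmod d"
    by (simp only: norm_mult norm_power norm_of_nat)
  also have "\<dots> \<le> real (n+1) * \<rho> ^ n * cmod d"
    using assms by (intro mult_right_mono mult_left_mono power_mono) simp_all
  finally show ?thesis .
qed

lemma Suc_mult_power_tendsto_zero:
  fixes \<rho> :: real
  assumes "0 \<le> \<rho>" "\<rho> < 1"
  shows "(\<lambda>n. real (n+1) * \<rho> ^ n) \<longlonglongrightarrow> 0"
proof -
  have "(\<lambda>n. real n * \<rho> ^ n + \<rho> ^ n) \<longlonglongrightarrow> 0 + 0"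
    using assms by (intro tendsto_add powser_times_n_limit_0 LIMSEQ_power_zero) simp_all
  then show ?thesis
    by (simp add: algebra_simps)
qed

lemma diagonal_power_deriv_tail:
  fixes f :: "nat \<Rightarrow> 'a::complex_hilbert"
  assumes f: "orthonormal_seq f" and "norm x \<le> \<rho>" "0 \<le> e"
    and small: "\<And>n. n \<ge> N \<Longrightarrow> real (n+1) * \<rho> ^ n \<le> e"
  shows "summable (\<lambda>n. scaleC (of_nat (n+1) * cinner x (f n) ^ n * cinner h (f n)) (f n))"
    and "norm ((\<Sum>n<N. scaleC (of_nat (n+1) * cinner x (f n) ^ n * cinner h (f n)) (f n))
                - diagonal_power_deriv f x h) \<le> e * norm h"
proof -
  define b where "b n = of_nat (n+1) * cinner x (f n) ^ n * cinner h (f n)" for n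
  have "cmod (b (i+N)) \<le> e * cmod (cinner h (f (i+N)))" for i
  proof -
    have "cmod (b (i+N)) \<le> real (i+N+1) * \<rho> ^ (i+N) * cmod (cinner h (f (i+N)))"
      unfolding b_def using cmod_cinner_orthonormal_seq_le[OF f, of x "i+N"] assms(2)
      by (intro cmod_deriv_coeff_le) simp
    also have "\<dots> \<le> e * cmod (cinner h (f (i+N)))"
      using small[of "i+N"] by (intro mult_right_mono) simp_all
    finally show ?thesis .
  qed
  note tail = orthonormal_series_dominated[OF orthonormal_seq_shift[OF f] \<open>0 \<le> e\<close> this]
  show sm: "summable (\<lambda>n. scaleC (b n) (f n))"
    using tail(1) summable_iff_shift[of "\<lambda>n. scaleC (b n) (f n)" N] by simp
  have "(\<Sum>n<N. scaleC (b n) (f n)) - (\<Sum>n. scaleC (b n) (f n)) = - (\<Sum>i. scaleC (b (i+N)) (f (i+N)))"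
    using suminf_minus_initial_segment[OF sm, of N] by simp
  then show "norm ((\<Sum>n<N. scaleC (b n) (f n)) - diagonal_power_deriv f x h) \<le> e * norm h"
    using tail(2) by (simp add: diagonal_power_deriv_def b_def)
qed

lemma summable_diagonal_power_deriv:
  fixes f :: "nat \<Rightarrow> 'a::complex_hilbert"
  assumes f: "orthonormal_seq f" and "norm z < 1"
  shows "summable (\<lambda>n. scaleC (of_nat (n+1) * cinner z (f n) ^ n * cinner h (f n)) (f n))"
proof -
  have "eventually (\<lambda>n. real (n+1) * norm z ^ n < 1) sequentially"
    using Suc_mult_power_tendsto_zero[OF norm_ge_zero assms(2)] by (rule order_tendstoD) simp
  then obtain N where "\<And>n. n \<ge> N \<Longrightarrow> real (n+1) * norm z ^ n \<le> 1"
    by (force simp: eventually_sequentially)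
  then show ?thesis
    by (rule diagonal_power_deriv_tail(1)[OF f order_refl zero_le_one])
qed

lemma diagonal_power_deriv_scaleC:
  fixes f :: "nat \<Rightarrow> 'a::complex_hilbert"
  assumes "orthonormal_seq f" "norm z < 1"
  shows "diagonal_power_deriv f z (scaleC c h) = scaleC c (diagonal_power_deriv f z h)"
proof -
  have "diagonal_power_deriv f z (scaleC c h)
      = (\<Sum>n. scaleC c (scaleC (of_nat (n+1) * cinner z (f n) ^ n * cinner h (f n)) (f n)))"
    unfolding diagonal_power_deriv_def by (simp add: cinner_scaleC_left scaleC_scaleC mult_ac)
  also have "\<dots> = scaleC c (diagonal_power_deriv f z h)"
    unfolding diagonal_power_deriv_def
    by (rule bounded_linear.suminf[OF bounded_linear_scaleC_right
          summable_diagonal_power_deriv[OF assms], symmetric])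
  finally show ?thesis .
qed

lemma diagonal_power_deriv_uniform:
  fixes f :: "nat \<Rightarrow> 'a::complex_hilbert"
  assumes f: "orthonormal_seq f" and "0 \<le> \<rho>" "\<rho> < 1" "e > 0"
  shows "\<forall>\<^sub>F n in sequentially. \<forall>x\<in>ball 0 \<rho>. \<forall>h.
           norm ((\<Sum>i<n. scaleC (of_nat (i+1) * cinner x (f i) ^ i * cinner h (f i)) (f i))
                 - diagonal_power_deriv f x h) \<le> e * norm h"
proof -
  have "eventually (\<lambda>n. real (n+1) * \<rho> ^ n < e) sequentially"
    using Suc_mult_power_tendsto_zero[OF assms(2,3)] \<open>e > 0\<close> by (rule order_tendstoD)
  then obtain N where N: "\<And>n. n \<ge> N \<Longrightarrow> real (n+1) * \<rho> ^ n \<le> e"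
    by (force simp: eventually_sequentially)
  show ?thesis
    unfolding eventually_sequentially
  proof (intro exI[of _ N] allI impI ballI)
    fix n and x h :: 'a
    assume "N \<le> n" "x \<in> ball 0 \<rho>"
    then show "norm ((\<Sum>i<n. scaleC (of_nat (i+1) * cinner x (f i) ^ i * cinner h (f i)) (f i))
          - diagonal_power_deriv f x h) \<le> e * norm h"
      using N \<open>e > 0\<close> by (intro diagonal_power_deriv_tail(2)[OF f, where \<rho>=\<rho>]) auto
  qed
qed

lemma diagonal_power_map_has_derivative:
  fixes f :: "nat \<Rightarrow> 'a::complex_hilbert"
  assumes f: "orthonormal_seq f" and z: "norm z < 1"
  shows "(diagonal_power_map f has_derivative diagonal_power_deriv f z) (at z)"
proof -
  define \<rho> where "\<rho> = (1 + norm z) / 2"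
  have \<rho>: "norm z < \<rho>" "\<rho> < 1" "0 < \<rho>"
    using z by (auto simp: \<rho>_def add_pos_nonneg)
  define S where "S = ball (0::'a) \<rho>"
  have "\<exists>g. \<forall>x\<in>S. (\<lambda>n. scaleC (cinner x (f n) ^ (n+1)) (f n)) sums g x
      \<and> (g has_derivative diagonal_power_deriv f x) (at x within S)"
  proof (rule has_derivative_series[where x=0 and l=0 and
        f'="\<lambda>n x h. scaleC (of_nat (n+1) * cinner x (f n) ^ n * cinner h (f n)) (f n)"])
    show "convex S" "0 \<in> S"
      using \<rho> by (simp_all add: S_def)
    show "(\<lambda>n. scaleC (cinner 0 (f n) ^ (n+1)) (f n)) sums 0"
      by simp
  qed (use has_derivative_cinner_power_scaleC diagonal_power_deriv_uniform[OF f less_imp_le[OF \<rho>(3)] \<rho>(2)] in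
      \<open>auto simp: S_def\<close>)
  then obtain g where g: "\<And>x. x \<in> S \<Longrightarrow> (\<lambda>n. scaleC (cinner x (f n) ^ (n+1)) (f n)) sums g x"
      "\<And>x. x \<in> S \<Longrightarrow> (g has_derivative diagonal_power_deriv f x) (at x within S)"
    by blast
  have "z \<in> S" "open S"
    using \<rho> by (simp_all add: S_def)
  moreover have "g x = diagonal_power_map f x" if "x \<in> S" for x
    using g(1)[OF that] by (simp add: diagonal_power_map_def sums_iff)
  ultimately show ?thesis
    using g(2) at_within_open by (metis has_derivative_transform_within_open)
qed

lemma holo_on_diagonal_power_map:
  fixes f :: "nat \<Rightarrow> 'a::complex_hilbert"
  assumes "orthonormal_seq f"
  shows "holo_on (diagonal_power_map f) (ball 0 1)"
  unfolding holo_on_def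
proof
  fix z :: 'a
  assume "z \<in> ball 0 1"
  then show "\<exists>L. (diagonal_power_map f has_derivative L) (at z) \<and>
      (\<forall>c x. L (scaleC c x) = scaleC c (L x))"
    using diagonal_power_map_has_derivative[OF assms] diagonal_power_deriv_scaleC[OF assms]
    by (intro exI[of _ "diagonal_power_deriv f z"]) simp
qed

lemma holo_on_cong:
  fixes f g :: "'a::complex_hilbert \<Rightarrow> 'b::complex_hilbert"
  assumes "open S" "\<And>z. z \<in> S \<Longrightarrow> f z = g z"
  shows "holo_on f S \<longleftrightarrow> holo_on g S"
  unfolding holo_on_def using assms
  by (metis has_derivative_transform_within_open)

lemma self_maps_cong:
  fixes f g :: "'a::complex_hilbert \<Rightarrow> 'a"
  assumes "\<And>z. z \<in> ball 0 1 \<Longrightarrow> f z = g z"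
  shows "f \<in> self_maps \<longleftrightarrow> g \<in> self_maps"
proof -
  have "holo_on f (ball 0 1) \<longleftrightarrow> holo_on g (ball 0 1)"
    by (rule holo_on_cong[OF open_ball assms])
  moreover have "f ` ball 0 1 = g ` ball 0 1"
    using assms by (rule image_cong[OF refl])
  ultimately show ?thesis
    unfolding self_maps_def by simp
qed

lemma diagonal_power_map_in_self_maps:
  fixes f :: "nat \<Rightarrow> 'a::complex_hilbert"
  assumes "orthonormal_seq f"
  shows "diagonal_power_map f \<in> self_maps"
  unfolding self_maps_def
proof (intro CollectI conjI subsetI)
  show "holo_on (diagonal_power_map f) (ball 0 1)"
    by (rule holo_on_diagonal_power_map[OF assms])
  fix y
  assume "y \<in> diagonal_power_map f ` ball 0 1"
  then obtain z where "norm z < 1" "y = diagonal_power_map f z"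
    by auto
  then show "y \<in> ball 0 1"
    using norm_diagonal_power_map_le[OF assms, of z] by simp
qed

definition diagonal_test_point :: "(nat \<Rightarrow> 'a::complex_hilbert) \<Rightarrow> nat \<Rightarrow> 'a" where
  "diagonal_test_point f k = scaleC (complex_of_real (4 powr (-1 / real (k+1)))) (f k)"

lemma norm_diagonal_test_point_less_one:
  assumes "orthonormal_seq f"
  shows "norm (diagonal_test_point f k) < 1"
  by (simp add: diagonal_test_point_def norm_scaleC norm_orthonormal_seq[OF assms] powr_less_one)

lemma diagonal_power_map_test_point:
  assumes "orthonormal_seq f"
  shows "diagonal_power_map f (diagonal_test_point f k) = scaleR (1/4) (f k)"
  unfolding diagonal_test_point_def by (rule diagonal_power_map_root_scaleC_basis[OF assms]) simp

lemma dist_diagonal_power_map_test_points: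
  assumes "orthonormal_seq f" "j \<noteq> k"
  shows "norm (diagonal_power_map f (diagonal_test_point f j)
               - diagonal_power_map f (diagonal_test_point f k)) = sqrt 2 / 4"
  using norm_diff_orthonormal_seq[OF assms]
  by (simp add: diagonal_power_map_test_point[OF assms(1)] flip: scaleR_diff_right)

lemma not_compact_closure_diagonal_power_map_small_values:
  fixes f :: "nat \<Rightarrow> 'a::complex_hilbert"
  assumes f: "orthonormal_seq f"
  shows "\<not> compact (closure
           {diagonal_power_map f z | z. z \<in> ball 0 1 \<and> norm (diagonal_power_map f z) < 1/2})"
proof (rule not_compact_closure_if_separated)
  show "range (\<lambda>k. diagonal_power_map f (diagonal_test_point f k))
      \<subseteq> {diagonal_power_map f z | z. z \<in> ball 0 1 \<and> norm (diagonal_power_map f z) < 1/2}"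
  proof (intro subsetI)
    fix y
    assume "y \<in> range (\<lambda>k. diagonal_power_map f (diagonal_test_point f k))"
    then obtain k where y: "y = diagonal_power_map f (diagonal_test_point f k)"
      by blast
    have "norm y < 1/2"
      by (simp add: y diagonal_power_map_test_point[OF f] norm_orthonormal_seq[OF f])
    then show "y \<in> {diagonal_power_map f z | z. z \<in> ball 0 1 \<and> norm (diagonal_power_map f z) < 1/2}"
      using y norm_diagonal_test_point_less_one[OF f, of k] by auto
  qed
  show "sqrt 2 / 4 \<le> dist (diagonal_power_map f (diagonal_test_point f j))
                          (diagonal_power_map f (diagonal_test_point f k))" if "j \<noteq> k" for j k
    using dist_diagonal_power_map_test_points[OF f that] by (simp add: dist_norm)
qed simp

theorem mainTheorem6:
  fixes e :: "nat \<Rightarrow> 'a::complex_hilbert"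
    and \<phi> :: "'a \<Rightarrow> 'a"
  assumes orthonormal: "\<forall>j\<ge>1. \<forall>k\<ge>1. cinner (e j) (e k) = (if j = k then 1 else 0)"
    and phi_def: "\<forall>z\<in>ball 0 1. \<phi> z = (\<Sum>n. scaleC ((cinner z (e (n+1))) ^ (n+1)) (e (n+1)))"
  shows "\<phi> \<in> self_maps \<and>
    (\<forall>r::real. 0 < r \<and> r < 1 \<longrightarrow> rel_compact (\<phi> ` ball 0 r)) \<and>
    \<not> rel_compact {\<phi> z | z. z \<in> ball 0 1 \<and> norm (\<phi> z) < 1/2} \<and>
    (\<forall>k\<ge>1. scaleC (complex_of_real (4 powr (-1 / real k))) (e k) \<in> ball 0 1 \<and>
           norm (\<phi> (scaleC (complex_of_real (4 powr (-1 / real k))) (e k))) < 1/2) \<and>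
    (\<forall>k\<ge>1. \<forall>s\<ge>1.
           norm (\<phi> (scaleC (complex_of_real (4 powr (-1 / real k))) (e k))
               - \<phi> (scaleC (complex_of_real (4 powr (-1 / real (k+s)))) (e (k+s)))) = sqrt 2 / 4)"
proof -
  define f where "f n = e (n+1)" for n
  have f: "orthonormal_seq f"
    using orthonormal by (simp add: orthonormal_seq_def f_def)
  have \<phi>_eq: "\<phi> z = diagonal_power_map f z" if "z \<in> ball 0 1" for z
    using phi_def that by (simp add: diagonal_power_map_def f_def)
  have test_point: "scaleC (complex_of_real (4 powr (-1 / real k))) (e k) = diagonal_test_point f (k-1)"
    if "k \<ge> 1" for k
    using that by (simp add: diagonal_test_point_def f_def)
  have \<phi>_test_point: "\<phi> (diagonal_test_point f k) = scaleR (1/4) (f k)" for k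
    using \<phi>_eq norm_diagonal_test_point_less_one[OF f] diagonal_power_map_test_point[OF f] by simp
  show ?thesis
  proof (intro conjI allI impI)
    show "\<phi> \<in> self_maps"
      using self_maps_cong[OF \<phi>_eq] diagonal_power_map_in_self_maps[OF f] by simp
    show "rel_compact (\<phi> ` ball 0 r)" if "0 < r \<and> r < 1" for r
    proof -
      have "\<phi> ` ball 0 r = diagonal_power_map f ` ball 0 r"
        using that \<phi>_eq by (intro image_cong) auto
      then show ?thesis
        using that compact_closure_diagonal_power_map_ball[OF f, of r] by (simp add: rel_compact_def)
    qed
    have "{\<phi> z | z. z \<in> ball 0 1 \<and> norm (\<phi> z) < 1/2}
        = {diagonal_power_map f z | z. z \<in> ball 0 1 \<and> norm (diagonal_power_map f z) < 1/2}"
      using \<phi>_eq by force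
    then show "\<not> rel_compact {\<phi> z | z. z \<in> ball 0 1 \<and> norm (\<phi> z) < 1/2}"
      using not_compact_closure_diagonal_power_map_small_values[OF f] by (simp add: rel_compact_def)
  next
    fix k :: nat
    assume k: "k \<ge> 1"
    show "scaleC (complex_of_real (4 powr (-1 / real k))) (e k) \<in> ball 0 1"
      unfolding test_point[OF k] using norm_diagonal_test_point_less_one[OF f] by simp
    show "norm (\<phi> (scaleC (complex_of_real (4 powr (-1 / real k))) (e k))) < 1/2"
      unfolding test_point[OF k] \<phi>_test_point by (simp add: norm_orthonormal_seq[OF f])
  next
    fix k s :: nat
    assume "k \<ge> 1" "s \<ge> 1"
    then show "norm (\<phi> (scaleC (complex_of_real (4 powr (-1 / real k))) (e k))
        - \<phi> (scaleC (complex_of_real (4 powr (-1 / real (k+s)))) (e (k+s)))) = sqrt 2 / 4"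
      using test_point[of k] test_point[of "k+s"] \<phi>_eq norm_diagonal_test_point_less_one[OF f]
        dist_diagonal_power_map_test_points[OF f, of "k-1" "k+s-1"]
      by simp
  qed
qed

end
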